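(* Let $k\geq 3$ be an integer and $\ell\geq 2$ an even integer, and let $G_1^{\{\ell,k\}}$ and $G_2^{\{\ell,k\}}$ be the indistinguishability graphs (for a fixed permutation $\sigma\neq\mathrm{id}$ of $[k]$), with vertices labeled by their names as defined below. Then for every $i\in[k]$ and every $v\in\{(i,1),(i,\ell)\}$, $$N^{3(\ell/2-1)}_{G_1^{\{\ell,k\}}}[v]=N^{3(\ell/2-1)}_{G_2^{\{\ell,k\}}}[v],$$ i.e. the subgraphs induced by the vertices at distance at most $3(\ell/2-1)$ from $v$ coincide (as labeled graphs) in the two graphs.
   Context: Let $[m]=\{1,\dots,m\}$. For a graph $H$, vertex $v$ and $t\geq 0$, $N^t_H[v]$ denotes the subgraph of $H$ induced by $\{u\in V(H):\mathrm{dist}_H(u,v)\leq t\}$. Path of cliques: for permutations $\tau_1,\dots,\tau_{\ell-1}$ of $[k]$, $P(\tau_1,\dots,\tau_{\ell-1})$ has vertex set $[k]\times[\ell]$ and edges $\{(a,i),(b,i)\}$ for $a\neq b$, $i\in[\ell]$, and $\{(a,i),(b,i+1)\}$ for $i\in[\ell-1]$, $a,b\in[k]$, $b\neq\tau_i(a)$. The $k$-edge-gadget transformation: given a graph $G$ and for each edge a chosen ordered pair $(u,v)$, keep all vertices of $G$, delete each edge $\{u,v\}$, and add $k$ new vertices named $(u,v,1),\dots,(u,v,k)$ forming a clique together with edges $\{u,(u,v,j)\}$ for $j=1,\dots,k-1$ and $\{v,(u,v,k)\}$. Indistinguishability graphs: let $G_1=P(\tau_1,\dots,\tau_{\ell-1})$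 with all $\tau_i=\mathrm{id}$, and $G_2=P(\tau_1',\dots,\tau_{\ell-1}')$ with $\tau_i'=\mathrm{id}$ for $i\neq \ell/2$ and $\tau'_{\ell/2}=\sigma$, where $\sigma$ is a fixed permutation of $[k]$ different from the identity. $G_1^{\{\ell,k\}}$ (resp. $G_2^{\{\ell,k\}}$) is obtained from $G_1$ (resp. $G_2$) by the $k$-edge-gadget transformation, where an edge $\{(a,i),(b,i)\}$ with $a<b$ is oriented as $((a,i),(b,i))$ and an edge $\{(a,i),(b,i+1)\}$ is oriented as $((a,i),(b,i+1))$; vertices are labeled by these names ($(a,i)$ for original vertices, $(u,v,j)$ for gadget vertices). *)

theory Defs
  imports "HOL-Combinatorics.Permutations"
begin

datatype vname = Orig "nat \<times> nat" | Gad "nat \<times> nat" "nat \<times> nat" nat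

type_synonym 'a graph = "'a set \<times> 'a set set"

inductive reach :: "'a set set \<Rightarrow> 'a \<Rightarrow> 'a \<Rightarrow> nat \<Rightarrow> bool" for E where
  refl: "reach E u u n"
| step: "reach E u w n \<Longrightarrow> {w, x} \<in> E \<Longrightarrow> reach E u x (Suc n)"

definition closed_nbhd :: "'a graph \<Rightarrow> 'a \<Rightarrow> nat \<Rightarrow> 'a graph" where
  "closed_nbhd H v t =
     (let S = {u \<in> fst H. reach (snd H) v u t}
      in (S, {e \<in> snd H. e \<subseteq> S}))"

definition poc_vertices :: "nat \<Rightarrow> nat \<Rightarrow> (nat \<times> nat) set" where
  "poc_vertices k l = {1..k} \<times> {1..l}"

definition poc_arcs :: "nat \<Rightarrow> nat \<Rightarrow> (nat \<Rightarrow> nat \<Rightarrow> nat) \<Rightarrow> ((nat \<times> nat) \<times> (nat \<times> nat)) set" where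
  "poc_arcs k l \<tau> =
     {((a,i),(b,i)) | a b i. 1 \<le> a \<and> a < b \<and> b \<le> k \<and> 1 \<le> i \<and> i \<le> l}
   \<union> {((a,i),(b,Suc i)) | a b i. 1 \<le> a \<and> a \<le> k \<and> 1 \<le> b \<and> b \<le> k \<and> 1 \<le> i \<and> i < l
                                 \<and> b \<noteq> \<tau> i a}"

definition path_of_cliques :: "nat \<Rightarrow> nat \<Rightarrow> (nat \<Rightarrow> nat \<Rightarrow> nat) \<Rightarrow> (nat \<times> nat) graph" where
  "path_of_cliques k l \<tau> = (poc_vertices k l, {{x, y} | x y. (x, y) \<in> poc_arcs k l \<tau>})"

definition edge_gadget :: "nat \<Rightarrow> (nat \<times> nat) set \<Rightarrow> ((nat \<times> nat) \<times> (nat \<times> nat)) set \<Rightarrow> vname graph" where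
  "edge_gadget k V D =
     (Orig ` V \<union> {Gad u v j | u v j. (u, v) \<in> D \<and> 1 \<le> j \<and> j \<le> k},
      {{Gad u v j, Gad u v j'} | u v j j'. (u, v) \<in> D \<and> 1 \<le> j \<and> j \<le> k \<and> 1 \<le> j' \<and> j' \<le> k \<and> j \<noteq> j'}
      \<union> {{Orig u, Gad u v j} | u v j. (u, v) \<in> D \<and> 1 \<le> j \<and> j \<le> k - 1}
      \<union> {{Orig v, Gad u v k} | u v. (u, v) \<in> D})"

definition G1 :: "nat \<Rightarrow> nat \<Rightarrow> vname graph" where
  "G1 l k = edge_gadget k (poc_vertices k l) (poc_arcs k l (\<lambda>i. id))"

definition G2 :: "nat \<Rightarrow> nat \<Rightarrow> (nat \<Rightarrow> nat) \<Rightarrow> vname graph" where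
  "G2 l k \<sigma> = edge_gadget k (poc_vertices k l)
                  (poc_arcs k l (\<lambda>i. if i = l div 2 then \<sigma> else id))"

end

theory Submission
  imports Defs
begin

text \<open>
  Call \<open>f\<close> edge-Lipschitz if it changes by at most one along every edge. Then a walk of
  length at most \<open>t\<close> from a vertex with \<open>f = 0\<close> stays in the sublevel set \<open>{f \<le> t}\<close>, so two
  graphs that agree on the vertices and edges inside this set have the same ball of radius \<open>t\<close>.
  The two gadget graphs differ only in the gadgets of arcs between layers \<open>l/2\<close> and \<open>l/2 + 1\<close>.
  Since passing from one layer to the next through a gadget takes three edges, the distance
  from layer \<open>1\<close> (or layer \<open>l\<close>) to these gadgets exceeds \<open>3 (l/2 - 1)\<close>; this is witnessed
  by explicit potentials.
\<close>

definition edge_lipschitz :: "'a set set \<Rightarrow> ('a \<Rightarrow> nat) \<Rightarrow> bool" where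
  "edge_lipschitz E f \<longleftrightarrow> (\<forall>x y. {x, y} \<in> E \<longrightarrow> f y \<le> f x + 1)"

lemma reach_potential_le:
  assumes "edge_lipschitz E f" and "reach E v u n"
  shows "f u \<le> f v + n"
  using assms(2) by induction (use assms(1) in \<open>fastforce simp: edge_lipschitz_def\<close>)+

lemma reach_transfer_below:
  assumes "edge_lipschitz E1 f" and "f v = 0"
    and agree: "\<And>e. \<forall>x\<in>e. f x \<le> t \<Longrightarrow> e \<in> E1 \<Longrightarrow> e \<in> E2"
    and "reach E1 v u n" and "n \<le> t"
  shows "reach E2 v u n"
  using assms(4,2,5)
proof induction
  case refl
  show ?case by (rule reach.refl)
next
  case (step v w n x)
  have "f w \<le> n" using reach_potential_le[OF assms(1) step.hyps(1)] step.prems by simp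
  moreover have "f x \<le> f w + 1" using assms(1) step.hyps(2) by (simp add: edge_lipschitz_def)
  ultimately have "{w, x} \<in> E2" using agree[OF _ step.hyps(2)] step.prems by auto
  with step show ?case by (auto intro: reach.step)
qed

lemma closed_nbhd_eq_if_agree_below:
  fixes H1 H2 :: "'a graph"
  assumes lip1: "edge_lipschitz (snd H1) f" and lip2: "edge_lipschitz (snd H2) f" and "f v = 0"
    and vertices: "\<And>x. f x \<le> t \<Longrightarrow> x \<in> fst H1 \<longleftrightarrow> x \<in> fst H2"
    and edges: "\<And>e. \<forall>x\<in>e. f x \<le> t \<Longrightarrow> e \<in> snd H1 \<longleftrightarrow> e \<in> snd H2"
  shows "closed_nbhd H1 v t = closed_nbhd H2 v t"
proof -
  have "e \<in> snd H2" if "\<forall>x\<in>e. f x \<le> t" and "e \<in> snd H1" for e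
    using edges that by blast
  moreover have "e \<in> snd H1" if "\<forall>x\<in>e. f x \<le> t" and "e \<in> snd H2" for e
    using edges that by blast
  ultimately have reach_iff: "reach (snd H1) v u t \<longleftrightarrow> reach (snd H2) v u t" for u
    using reach_transfer_below[OF lip1 \<open>f v = 0\<close>, of t "snd H2" u t]
      reach_transfer_below[OF lip2 \<open>f v = 0\<close>, of t "snd H1" u t] by blast
  have low: "f u \<le> t" if "reach (snd H1) v u t" for u
    using reach_potential_le[OF lip1 that] \<open>f v = 0\<close> by simp
  define S where "S = {u \<in> fst H1. reach (snd H1) v u t}"
  have "u \<in> fst H2 \<and> reach (snd H2) v u t \<longleftrightarrow> u \<in> fst H1 \<and> reach (snd H1) v u t" for u
    using vertices[of u] low[of u] reach_iff[of u] by blast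
  then have S_eq: "{u \<in> fst H2. reach (snd H2) v u t} = S"
    unfolding S_def by blast
  have "e \<in> snd H1 \<longleftrightarrow> e \<in> snd H2" if "e \<subseteq> S" for e
    using edges[of e] low that unfolding S_def by blast
  then have "{e \<in> snd H1. e \<subseteq> S} = {e \<in> snd H2. e \<subseteq> S}"
    by blast
  then show ?thesis
    unfolding closed_nbhd_def Let_def S_eq by (simp add: S_def)
qed

lemma edge_gadget_edge_mono_below:
  assumes "\<And>u w j. f (Gad u w j) \<le> t \<Longrightarrow> (u, w) \<in> D1 \<Longrightarrow> (u, w) \<in> D2"
    and "\<forall>x\<in>e. f x \<le> t" and "e \<in> snd (edge_gadget k V D1)"
  shows "e \<in> snd (edge_gadget k V D2)"
  using assms(3) unfolding edge_gadget_def snd_conv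
  by (elim UnE CollectE exE conjE) (use assms(1,2) in fastforce)+

lemma edge_gadget_agree_below:
  assumes "\<And>u w j. f (Gad u w j) \<le> t \<Longrightarrow> (u, w) \<in> D1 \<longleftrightarrow> (u, w) \<in> D2"
  shows "f x \<le> t \<Longrightarrow> x \<in> fst (edge_gadget k V D1) \<longleftrightarrow> x \<in> fst (edge_gadget k V D2)"
    and "\<forall>x\<in>e. f x \<le> t \<Longrightarrow> e \<in> snd (edge_gadget k V D1) \<longleftrightarrow> e \<in> snd (edge_gadget k V D2)"
proof -
  show "x \<in> fst (edge_gadget k V D1) \<longleftrightarrow> x \<in> fst (edge_gadget k V D2)" if "f x \<le> t"
    using assms that by (cases x) (simp_all add: edge_gadget_def, blast)
  show "e \<in> snd (edge_gadget k V D1) \<longleftrightarrow> e \<in> snd (edge_gadget k V D2)" if "\<forall>x\<in>e. f x \<le> t"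
    using edge_gadget_edge_mono_below[of f t D1 D2] edge_gadget_edge_mono_below[of f t D2 D1]
      assms that by blast
qed

lemma edge_gadget_edgeE:
  assumes "{x, y} \<in> snd (edge_gadget k V D)"
  obtains u w j j' where "(u, w) \<in> D" "j \<noteq> j'" "{x, y} = {Gad u w j, Gad u w j'}"
  | u w j where "(u, w) \<in> D" "1 \<le> j" "j \<le> k - 1" "{x, y} = {Orig u, Gad u w j}"
  | u w where "(u, w) \<in> D" "{x, y} = {Orig w, Gad u w k}"
  using assms unfolding edge_gadget_def by auto

lemma poc_arcs_layers:
  assumes "((a, i), (b, i')) \<in> poc_arcs k l \<tau>"
  shows "1 \<le> i \<and> (i' = i \<or> i' = Suc i \<and> i' \<le> l)"
  using assms unfolding poc_arcs_def by auto

text \<open>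
  Lower bounds for the distance from layer \<open>1\<close> and from layer \<open>l\<close>: an original vertex in layer
  \<open>i\<close> is three steps further out than one in the previous layer, and the gadget vertices
  in between sit at the intermediate values.
\<close>

definition left_potential :: "nat \<Rightarrow> vname \<Rightarrow> nat" where
  "left_potential k x = (case x of
      Orig u \<Rightarrow> 3 * (snd u - 1)
    | Gad u w j \<Rightarrow> 3 * (snd u - 1) + (if snd w = Suc (snd u) \<and> j = k then 2 else 1))"

definition right_potential :: "nat \<Rightarrow> nat \<Rightarrow> vname \<Rightarrow> nat" where
  "right_potential l k x = (case x of
      Orig u \<Rightarrow> 3 * (l - snd u)
    | Gad u w j \<Rightarrow>
        if snd w = Suc (snd u) then 3 * (l - snd w) + (if j = k then 1 else 2)
        else 3 * (l - snd u) + 1)"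

lemma edge_lipschitz_left_potential:
  "edge_lipschitz (snd (edge_gadget k V (poc_arcs k l \<tau>))) (left_potential k)"
  unfolding edge_lipschitz_def
proof (intro allI impI)
  fix x y assume "{x, y} \<in> snd (edge_gadget k V (poc_arcs k l \<tau>))"
  then show "left_potential k y \<le> left_potential k x + 1"
    by (cases rule: edge_gadget_edgeE)
      (auto simp: doubleton_eq_iff left_potential_def dest!: poc_arcs_layers)
qed

lemma edge_lipschitz_right_potential:
  "edge_lipschitz (snd (edge_gadget k V (poc_arcs k l \<tau>))) (right_potential l k)"
  unfolding edge_lipschitz_def
proof (intro allI impI)
  fix x y assume "{x, y} \<in> snd (edge_gadget k V (poc_arcs k l \<tau>))"
  then show "right_potential l k y \<le> right_potential l k x + 1"
    by (cases rule: edge_gadget_edgeE)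
      (auto simp: doubleton_eq_iff right_potential_def dest!: poc_arcs_layers)
qed

lemma poc_arcs_eq_off_layer:
  assumes "\<not> (snd u = m \<and> snd w = Suc m)"
  shows "(u, w) \<in> poc_arcs k l (\<lambda>i. id) \<longleftrightarrow> (u, w) \<in> poc_arcs k l (\<lambda>i. if i = m then \<sigma> else id)"
  using assms unfolding poc_arcs_def by (cases u; cases w) auto

lemma closed_nbhd_G1_G2_eq_if_potential:
  assumes lip: "\<And>\<tau>. edge_lipschitz (snd (edge_gadget k (poc_vertices k l) (poc_arcs k l \<tau>))) f"
    and middle: "\<And>u w j. snd u = l div 2 \<Longrightarrow> snd w = Suc (l div 2) \<Longrightarrow> t < f (Gad u w j)"
    and "f x = 0"
  shows "closed_nbhd (G1 l k) x t = closed_nbhd (G2 l k \<sigma>) x t"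
proof -
  define D1 where "D1 = poc_arcs k l (\<lambda>i. id)"
  define D2 where "D2 = poc_arcs k l (\<lambda>i. if i = l div 2 then \<sigma> else id)"
  have arcs: "(u, w) \<in> D1 \<longleftrightarrow> (u, w) \<in> D2" if "f (Gad u w j) \<le> t" for u w j
  proof -
    have "\<not> (snd u = l div 2 \<and> snd w = Suc (l div 2))"
      using middle[of u w j] that by auto
    then show ?thesis
      unfolding D1_def D2_def by (rule poc_arcs_eq_off_layer)
  qed
  show ?thesis
    using lip \<open>f x = 0\<close> edge_gadget_agree_below[OF arcs]
    unfolding G1_def G2_def D1_def D2_def by (intro closed_nbhd_eq_if_agree_below)
qed

theorem fact2:
  fixes k l :: nat and \<sigma> :: "nat \<Rightarrow> nat" and i :: nat and v :: "nat \<times> nat"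
  assumes "k \<ge> 3" and "l \<ge> 2" and "even l"
    and "\<sigma> permutes {1..k}" and "\<sigma> \<noteq> id"
    and "i \<in> {1..k}" and "v \<in> {(i, 1), (i, l)}"
  shows "closed_nbhd (G1 l k) (Orig v) (3 * (l div 2 - 1))
       = closed_nbhd (G2 l k \<sigma>) (Orig v) (3 * (l div 2 - 1))"
proof -
  \<comment> \<open>None of the hypotheses on \<open>k\<close>, \<open>l\<close>, \<open>\<sigma>\<close> and \<open>i\<close> is needed for the balls to agree.\<close>
  from \<open>v \<in> {(i, 1), (i, l)}\<close> consider "v = (i, 1)" | "v = (i, l)" by blast
  then show ?thesis
  proof cases
    case 1
    show ?thesis
      by (rule closed_nbhd_G1_G2_eq_if_potential[where f = "left_potential k"])
        (auto simp: edge_lipschitz_left_potential left_potential_def 1)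
  next
    case 2
    have "l div 2 - 1 \<le> l - Suc (l div 2)" by linarith
    then show ?thesis
      by (intro closed_nbhd_G1_G2_eq_if_potential[where f = "right_potential l k"])
        (auto simp: edge_lipschitz_right_potential right_potential_def 2)
  qed
qed

end
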